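(* Let $d$ be a positive integer and let $\mu$ be a balanced isotropic Borel probability measure on $\mathbb{S}^{d-1}$. If $\langle x,y\rangle\ge-\frac1d$ for all $x,y$ in the support of $\mu$, then $\mu$ is the uniform distribution over the vertices of a regular simplex, i.e. $\mu=\frac{1}{d+1}\sum_{j=1}^{d+1}\delta_{v_j}$ for some unit vectors $v_1,\dots,v_{d+1}\in\mathbb{S}^{d-1}$ with $\langle v_i,v_j\rangle=-\frac1d$ for all $i\ne j$.
   Context: A Borel probability measure $\mu$ on $\mathbb{S}^{d-1}$ is isotropic if $\int\langle x,y\rangle^2\,d\mu(x)=\frac1d$ for every $y\in\mathbb{S}^{d-1}$, and balanced if $\int x\,d\mu(x)=0$. *)

theory Defs
  imports "HOL-Probability.Probability"
begin

definition measure_support :: "'a::metric_space measure \<Rightarrow> 'a set" where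
  "measure_support M = {x. \<forall>e>0. emeasure M (ball x e) > 0}"

text \<open>A Borel probability measure on the unit sphere of the Euclidean space 'a
  (of dimension d = DIM('a)), represented as a probability measure on the Borel
  sets of 'a concentrated on the sphere.\<close>
definition sphere_prob :: "'a::euclidean_space measure \<Rightarrow> bool" where
  "sphere_prob M \<longleftrightarrow> prob_space M \<and> sets M = sets borel \<and> emeasure M (sphere 0 1) = 1"

definition isotropic :: "'a::euclidean_space measure \<Rightarrow> bool" where
  "isotropic M \<longleftrightarrow> (\<forall>y\<in>sphere (0::'a) 1. (\<integral>x. (x \<bullet> y)^2 \<partial>M) = 1 / real DIM('a))"

definition balanced :: "'a::euclidean_space measure \<Rightarrow> bool" where
  "balanced M \<longleftrightarrow> (\<integral>x. x \<partial>M) = (0::'a)"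

end

theory Submission
  imports Defs
begin

text \<open>For a support point x, the quadratic h(y) = (x \<bullet> y + 1/d)(1 - x \<bullet> y) is nonnegative on the
  support, since support points are unit vectors with pairwise inner products at least -1/d.
  By balance and isotropy its integral is 1/d + (1 - 1/d) \<cdot> 0 - 1/d = 0, so the continuous
  function h vanishes on the whole support: distinct support points have inner product exactly
  -1/d. Integrating y \<bullet> v, which is 1 at y = v and -1/d elsewhere on the support, against the
  balanced measure then shows that every support point carries mass 1/(d+1). Hence the support
  consists of exactly d+1 points, the vertices of a regular simplex, each of mass 1/(d+1).\<close>

lemma compl_measure_support:
  fixes M :: "'a::metric_space measure"
  assumes "sets M = sets borel"
  shows "- measure_support M = \<Union>{B. \<exists>c r. B = ball c r \<and> emeasure M B = 0}"
proof (intro equalityI subsetI)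
  fix x assume "x \<in> - measure_support M"
  then obtain e where "e > 0" "emeasure M (ball x e) = 0"
    unfolding measure_support_def by (auto simp: not_less)
  then show "x \<in> \<Union>{B. \<exists>c r. B = ball c r \<and> emeasure M B = 0}"
    by (intro UnionI[of "ball x e"]) auto
next
  fix x assume "x \<in> \<Union>{B. \<exists>c r. B = ball c r \<and> emeasure M B = 0}"
  then obtain c r where x: "x \<in> ball c r" and null: "emeasure M (ball c r) = 0" by auto
  have "ball x (r - dist c x) \<subseteq> ball c r"
  proof
    fix z assume "z \<in> ball x (r - dist c x)"
    then show "z \<in> ball c r" using dist_triangle[of c z x] by simp
  qed
  then have "emeasure M (ball x (r - dist c x)) = 0"
    using null emeasure_mono[of "ball x (r - dist c x)" "ball c r" M] assms by simp
  moreover have "r - dist c x > 0" using x by simp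
  ultimately have "\<not> (\<forall>e>0. emeasure M (ball x e) > 0)" by (metis less_irrefl)
  then show "x \<in> - measure_support M" unfolding measure_support_def by simp
qed

lemma closed_measure_support:
  fixes M :: "'a::metric_space measure"
  assumes "sets M = sets borel"
  shows "closed (measure_support M)"
  unfolding closed_def compl_measure_support[OF assms] by auto

lemma AE_in_measure_support:
  fixes M :: "'a::{metric_space, second_countable_topology} measure"
  assumes sets: "sets M = sets borel"
  shows "AE x in M. x \<in> measure_support M"
proof -
  let ?F = "{B. \<exists>c r. B = ball c r \<and> emeasure M B = 0}"
  obtain F' where F': "F' \<subseteq> ?F" "countable F'" "\<Union>F' = \<Union>?F"
    using Lindelof[of ?F] by auto
  have null: "(\<Union>B\<in>F'. B) \<in> null_sets M"
    using F'(1,2) sets by (intro null_sets_UN') (auto simp: null_sets_def)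
  have "- measure_support M = (\<Union>B\<in>F'. B)"
    using F'(3) compl_measure_support[OF sets] by simp
  then show ?thesis by (intro AE_I'[OF null]) auto
qed

lemma measure_support_disjoint_open:
  fixes M :: "'a::metric_space measure"
  assumes sets: "sets M = sets borel" and "open U" and AE: "AE x in M. x \<notin> U"
  shows "U \<inter> measure_support M = {}"
proof -
  have "emeasure M U = 0"
    using AE AE_iff_measurable[of U M "\<lambda>x. x \<notin> U"] \<open>open U\<close> sets
      sets_eq_imp_space_eq[OF sets]
    by simp
  have "x \<notin> measure_support M" if "x \<in> U" for x
  proof -
    obtain e where "e > 0" "ball x e \<subseteq> U"
      using \<open>open U\<close> \<open>x \<in> U\<close> open_contains_ball by blast
    then have "emeasure M (ball x e) = 0"
      using \<open>emeasure M U = 0\<close> emeasure_mono[of "ball x e" U M] sets borel_open[OF \<open>open U\<close>] by simp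
    then show ?thesis using \<open>e > 0\<close> unfolding measure_support_def by auto
  qed
  then show ?thesis by blast
qed

lemma measure_support_subset_closed:
  fixes M :: "'a::metric_space measure"
  assumes "sets M = sets borel" and "closed C" and "AE x in M. x \<in> C"
  shows "measure_support M \<subseteq> C"
  using measure_support_disjoint_open[of M "- C"] assms by auto

lemma continuous_AE_zero_on_measure_support:
  fixes M :: "'a::metric_space measure" and f :: "'a \<Rightarrow> 'b::t2_space"
  assumes "sets M = sets borel" and "continuous_on UNIV f" and "AE y in M. f y = c"
    and "x \<in> measure_support M"
  shows "f x = c"
  using measure_support_disjoint_open[of M "{y. f y \<noteq> c}"] assms
    open_Collect_neq[OF assms(2) continuous_on_const[of UNIV c]]
  by auto

lemma simplex_defect_expand: "(t + c) * (1 - t) = c + (1 - c) * t - t\<^sup>2" for t c :: real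
  by (simp add: algebra_simps power2_eq_square)

locale sphere_probability =
  fixes \<mu> :: "'a::euclidean_space measure"
  assumes sphere_prob: "sphere_prob \<mu>"
begin

sublocale prob_space \<mu>
  using sphere_prob by (simp add: sphere_prob_def)

lemma sets_eq_borel: "sets \<mu> = sets borel"
  using sphere_prob by (simp add: sphere_prob_def)

lemma AE_in_sphere: "AE x in \<mu>. x \<in> sphere 0 1"
  using sphere_prob by (intro AE_prob_1) (simp add: sphere_prob_def emeasure_eq_measure)

lemma measure_support_subset_sphere: "measure_support \<mu> \<subseteq> sphere 0 1"
  by (rule measure_support_subset_closed[OF sets_eq_borel closed_sphere AE_in_sphere])

lemma norm_measure_support: "x \<in> measure_support \<mu> \<Longrightarrow> norm x = 1"
  using measure_support_subset_sphere by auto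

lemma integrable_bounded_on_sphere:
  fixes f :: "'a \<Rightarrow> 'b::{banach, second_countable_topology}"
  assumes "f \<in> borel_measurable borel" and "\<And>y. norm y = 1 \<Longrightarrow> norm (f y) \<le> B"
  shows "integrable \<mu> f"
proof (rule integrable_const_bound)
  show "AE x in \<mu>. norm (f x) \<le> B"
    using AE_in_sphere by eventually_elim (simp add: assms(2))
  show "f \<in> borel_measurable \<mu>"
    using assms(1) by (simp add: measurable_cong_sets[OF sets_eq_borel refl])
qed

lemma integrable_inner: "integrable \<mu> (\<lambda>y. x \<bullet> y)"
proof (rule integrable_bounded_on_sphere[where B = "norm x"])
  fix y :: 'a assume "norm y = 1"
  then show "norm (x \<bullet> y) \<le> norm x" using Cauchy_Schwarz_ineq2[of x y] by simp
qed simp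

lemma integrable_inner_square: "integrable \<mu> (\<lambda>y. (x \<bullet> y)\<^sup>2)"
proof (rule integrable_bounded_on_sphere[where B = "(norm x)\<^sup>2"])
  fix y :: 'a assume "norm y = 1"
  then have "\<bar>x \<bullet> y\<bar> \<le> norm x" using Cauchy_Schwarz_ineq2[of x y] by simp
  then have "\<bar>x \<bullet> y\<bar>\<^sup>2 \<le> (norm x)\<^sup>2" by (rule power_mono) simp
  then show "norm ((x \<bullet> y)\<^sup>2) \<le> (norm x)\<^sup>2" by simp
qed simp

lemma integrable_simplex_defect: "integrable \<mu> (\<lambda>y. (x \<bullet> y + c) * (1 - x \<bullet> y))"
  using integrable_inner[of x] integrable_inner_square[of x] by (simp add: simplex_defect_expand)

end

locale balanced_isotropic_sphere_probability = sphere_probability +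
  assumes isotropic: "isotropic \<mu>" and balanced: "balanced \<mu>"
begin

lemma integral_inner_eq_0: "(\<integral>y. x \<bullet> y \<partial>\<mu>) = 0"
proof -
  have "integrable \<mu> (\<lambda>y. y)"
    by (rule integrable_bounded_on_sphere[where B = 1]) auto
  then show ?thesis using balanced by (simp add: balanced_def)
qed

lemma integral_inner_square:
  assumes "norm x = 1"
  shows "(\<integral>y. (x \<bullet> y)\<^sup>2 \<partial>\<mu>) = 1 / real DIM('a)"
proof -
  have "(\<lambda>y. (x \<bullet> y)\<^sup>2) = (\<lambda>y. (y \<bullet> x)\<^sup>2)" by (simp add: inner_commute)
  then show ?thesis using isotropic assms by (simp add: isotropic_def)
qed

lemma integral_simplex_defect_eq_0:
  assumes "norm x = 1"
  shows "(\<integral>y. (x \<bullet> y + 1 / real DIM('a)) * (1 - x \<bullet> y) \<partial>\<mu>) = 0"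
  using integrable_inner[of x] integrable_inner_square[of x]
  by (simp add: simplex_defect_expand integral_inner_eq_0 integral_inner_square[OF assms] prob_space)

end

locale inner_bounded_support = balanced_isotropic_sphere_probability +
  assumes inner_support_ge:
    "\<forall>x\<in>measure_support \<mu>. \<forall>y\<in>measure_support \<mu>. x \<bullet> y \<ge> - 1 / real DIM('a)"
begin

lemma inner_measure_support_eq:
  assumes x: "x \<in> measure_support \<mu>" and y: "y \<in> measure_support \<mu>" and "x \<noteq> y"
  shows "x \<bullet> y = - 1 / real DIM('a)"
proof -
  define h where "h z = (x \<bullet> z + 1 / real DIM('a)) * (1 - x \<bullet> z)" for z
  have h_nonneg: "0 \<le> h z" if "z \<in> measure_support \<mu>" for z
  proof -
    have "- 1 / real DIM('a) \<le> x \<bullet> z"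
      using inner_support_ge x that by blast
    moreover have "x \<bullet> z \<le> 1"
      using norm_cauchy_schwarz[of x z] norm_measure_support x that by simp
    ultimately show ?thesis
      unfolding h_def by (intro mult_nonneg_nonneg) simp_all
  qed
  have "integrable \<mu> h"
    unfolding h_def by (rule integrable_simplex_defect)
  moreover have "AE z in \<mu>. 0 \<le> h z"
    using AE_in_measure_support[OF sets_eq_borel] by eventually_elim (rule h_nonneg)
  moreover have "integral\<^sup>L \<mu> h = 0"
    unfolding h_def using integral_simplex_defect_eq_0 norm_measure_support x by blast
  ultimately have h_AE_0: "AE z in \<mu>. h z = 0" by (simp add: integral_nonneg_eq_0_iff_AE)
  have "continuous_on UNIV h"
    unfolding h_def by (intro continuous_intros)
  from continuous_AE_zero_on_measure_support[OF sets_eq_borel this h_AE_0 y]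
  have "h y = 0" .
  moreover have "x \<bullet> y \<noteq> 1"
    using \<open>x \<noteq> y\<close> norm_measure_support[OF x] norm_measure_support[OF y]
    by (metis norm_eq_1 vector_eq inner_commute)
  ultimately show ?thesis by (simp add: h_def)
qed

lemma measure_singleton_support:
  assumes v: "v \<in> measure_support \<mu>"
  shows "measure \<mu> {v} = 1 / (real DIM('a) + 1)"
proof -
  let ?c = "1 / real DIM('a)"
  have "AE x in \<mu>. v \<bullet> x = (1 + ?c) * indicator {v} x - ?c"
    using AE_in_measure_support[OF sets_eq_borel]
  proof eventually_elim
    case (elim x)
    then show ?case
      using inner_measure_support_eq[OF v elim] norm_measure_support v
      by (cases "x = v") (auto simp: dot_square_norm)
  qed
  then have "(\<integral>x. v \<bullet> x \<partial>\<mu>) = (\<integral>x. (1 + ?c) * indicator {v} x - ?c \<partial>\<mu>)"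
    by (rule integral_cong_AE[rotated 2]) (simp_all add: measurable_cong_sets[OF sets_eq_borel refl])
  also have "\<dots> = (1 + ?c) * measure \<mu> {v} - ?c"
    using integrable_real_indicator[of "{v}" \<mu>] sets_eq_borel
    by (simp add: emeasure_eq_measure prob_space)
  finally have "(1 + ?c) * measure \<mu> {v} = ?c"
    using integral_inner_eq_0 by simp
  then show ?thesis by (simp add: field_simps)
qed

lemma measure_finite_subset_support:
  assumes "finite F" and "F \<subseteq> measure_support \<mu>"
  shows "measure \<mu> F = real (card F) / (real DIM('a) + 1)"
proof -
  have "measure \<mu> F = (\<Sum>x\<in>F. measure \<mu> {x})"
    using assms(1) by (rule measure_eq_sum_singleton) (auto simp: sets_eq_borel)
  also have "\<dots> = (\<Sum>x\<in>F. 1 / (real DIM('a) + 1))"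
    using assms(2) measure_singleton_support by (intro sum.cong) auto
  finally show ?thesis by simp
qed

lemma finite_measure_support: "finite (measure_support \<mu>)"
proof (rule ccontr)
  assume "infinite (measure_support \<mu>)"
  then obtain F where F: "finite F" "card F = DIM('a) + 2" "F \<subseteq> measure_support \<mu>"
    using infinite_arbitrarily_large by blast
  then have "real (DIM('a) + 2) / (real DIM('a) + 1) \<le> 1"
    using measure_finite_subset_support[OF F(1,3)] prob_le_1[of F] by simp
  then show False by (simp add: field_simps)
qed

lemma card_measure_support: "card (measure_support \<mu>) = DIM('a) + 1"
proof -
  have "prob (measure_support \<mu>) = 1"
    using AE_in_measure_support[OF sets_eq_borel] closed_measure_support[OF sets_eq_borel]
    by (simp add: prob_eq_1 sets_eq_borel)
  then show ?thesis
    using measure_finite_subset_support[OF finite_measure_support order_refl]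
    by (simp add: field_simps)
qed

lemma emeasure_eq_card_support:
  assumes "A \<in> sets borel"
  shows "emeasure \<mu> A = ennreal (real (card (A \<inter> measure_support \<mu>)) / real (DIM('a) + 1))"
proof -
  have "emeasure \<mu> A = emeasure \<mu> (A \<inter> measure_support \<mu>)"
    using AE_in_measure_support[OF sets_eq_borel] assms closed_measure_support[OF sets_eq_borel]
    by (intro emeasure_eq_AE) (auto simp: sets_eq_borel)
  also have "\<dots> = ennreal (real (card (A \<inter> measure_support \<mu>)) / (real DIM('a) + 1))"
    using finite_measure_support
    by (simp add: emeasure_eq_measure measure_finite_subset_support)
  finally show ?thesis by simp
qed

end

theorem theorem5p5:
  fixes \<mu> :: "'a::euclidean_space measure"
  defines "d \<equiv> DIM('a)"
  assumes "sphere_prob \<mu>" and "isotropic \<mu>" and "balanced \<mu>"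
    and "\<forall>x\<in>measure_support \<mu>. \<forall>y\<in>measure_support \<mu>. x \<bullet> y \<ge> - 1 / real d"
  shows "\<exists>v :: nat \<Rightarrow> 'a.
           (\<forall>j\<in>{1..d+1}. norm (v j) = 1) \<and>
           (\<forall>i\<in>{1..d+1}. \<forall>j\<in>{1..d+1}. i \<noteq> j \<longrightarrow> v i \<bullet> v j = - 1 / real d) \<and>
           (\<forall>A\<in>sets borel. emeasure \<mu> A = ennreal (real (card {j\<in>{1..d+1}. v j \<in> A}) / real (d + 1)))"
proof -
  interpret inner_bounded_support \<mu>
    using assms(2-5) unfolding d_def by unfold_locales auto
  obtain v where v: "bij_betw v {1..d+1} (measure_support \<mu>)"
    using ex_bij_betw_nat_finite_1[OF finite_measure_support]
    by (auto simp: card_measure_support d_def)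
  show ?thesis
  proof (intro exI[of _ v] conjI ballI impI)
    fix j assume "j \<in> {1..d+1}"
    then show "norm (v j) = 1" using bij_betw_apply[OF v] norm_measure_support by blast
  next
    fix i j assume ij: "i \<in> {1..d+1}" "j \<in> {1..d+1}" "i \<noteq> j"
    then have "v i \<noteq> v j" using bij_betw_imp_inj_on[OF v] by (auto dest: inj_onD)
    then show "v i \<bullet> v j = - 1 / real d"
      using inner_measure_support_eq bij_betw_apply[OF v] ij unfolding d_def by blast
  next
    fix A :: "'a set" assume A: "A \<in> sets borel"
    have "card {j\<in>{1..d+1}. v j \<in> A} = card (A \<inter> measure_support \<mu>)"
      using bij_betw_same_card[OF bij_betw_Collect[OF v, of "\<lambda>y. y \<in> A"]]
      by (simp add: Int_def conj_commute)
    then show "emeasure \<mu> A = ennreal (real (card {j\<in>{1..d+1}. v j \<in> A}) / real (d + 1))"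
      using emeasure_eq_card_support[OF A] by (simp add: d_def)
  qed
qed

end
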